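(* Let $O^4$ be the set of odd-parity 4-bit strings, let $u\in O^4$ and let $u'$ be its bitwise complement ($u\oplus u'=1111$). Let $n\ge1$ and let four parties (the first being Alice) hold $X_j=(x^j_1,\dots,x^j_n)\in\{0,1\}^n$, $j=1,\dots,4$, under the promise that $x_i^1x_i^2x_i^3x_i^4\in A$ for all $i$, where $A\subseteq O^4$ is any fixed set. Let $f_{\{u,u'\}}(X_1,X_2,X_3,X_4)=\bigoplus_{i=1}^n\big(t_u(x_i^1x_i^2x_i^3x_i^4)\oplus t_{u'}(x_i^1x_i^2x_i^3x_i^4)\big)$, where $t_w(y)=1$ if $y=w$ and $0$ otherwise. Suppose the parties share $n$ copies of $|\psi_4\rangle=2^{-3/2}\big(\sum_{|v|=1}|v\rangle-\sum_{|v|=3}|v\rangle\big)$ ($v\in\{0,1\}^4$, $|v|$ the Hamming weight), the $j$-th qubit of each copy held by party $j$. Then, using local operations in which party $j$ applies $H$ to its qubit of the $i$-th copy if $x_i^j\ne u_j$ and the identity otherwise, followed by computational-basis measurements and local classical computation, Alice can obtain $f_{\{u,u'\}}(X_1,X_2,X_3,X_4)$ with only three classical bits of communication in total.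
   Context: $H$ is the Hadamard gate. Communication consists only of classical bits sent to Alice; no quantum communication is allowed. *)

theory Defs
  imports Complex_Main
begin

text \<open>Bits are booleans (True = 1), XOR is (\<noteq>). A 4-bit string is a bool list
 of length 4; entry j (0-based) belongs to party j+1; party index 0 is Alice.\<close>

definition weight :: "bool list \<Rightarrow> nat" where
  "weight v = length (filter id v)"

definition bits4 :: "bool list set" where
  "bits4 = {v. length v = 4}"

definition O4 :: "bool list set" where
  "O4 = {v. length v = 4 \<and> odd (weight v)}"

definition tw :: "bool list \<Rightarrow> bool list \<Rightarrow> bool" where
  "tw w y = (y = w)"

primrec xor_sum :: "nat \<Rightarrow> (nat \<Rightarrow> bool) \<Rightarrow> bool" where
  "xor_sum 0 g = False"
| "xor_sum (Suc k) g = (xor_sum k g \<noteq> g k)"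

definition psi4 :: "bool list \<Rightarrow> complex" where
  "psi4 v = (if weight v = 1 then 1 else if weight v = 3 then -1 else 0)
              / complex_of_real (2 powr (3/2))"

definition hadamard :: "bool \<Rightarrow> bool \<Rightarrow> complex" where
  "hadamard a b = (if a \<and> b then -1 else 1) / complex_of_real (sqrt 2)"

definition local_gate :: "bool \<Rightarrow> bool \<Rightarrow> bool \<Rightarrow> complex" where
  "local_gate applyH a b = (if applyH then hadamard a b else (if a = b then 1 else 0))"

text \<open>Amplitude <w| (G_1 \<otimes> G_2 \<otimes> G_3 \<otimes> G_4) |psi_4> for one copy,
  where party j applies H iff hs!j.\<close>
definition copy_amp :: "bool list \<Rightarrow> bool list \<Rightarrow> complex" where
  "copy_amp hs w = (\<Sum>v\<in>bits4. (\<Prod>j<4. local_gate (hs!j) (w!j) (v!j)) * psi4 v)"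

text \<open>Inputs/outcomes: X j i is bit i of party j (j = 0..3, i = 0..n-1).\<close>
definition at4 :: "(nat \<Rightarrow> nat \<Rightarrow> bool) \<Rightarrow> nat \<Rightarrow> bool list" where
  "at4 X i = [X 0 i, X 1 i, X 2 i, X 3 i]"

definition H_flags :: "bool list \<Rightarrow> bool list \<Rightarrow> bool list" where
  "H_flags u y = map (\<lambda>j. y!j \<noteq> u!j) [0..<4]"

definition outcome_prob ::
  "bool list \<Rightarrow> nat \<Rightarrow> (nat \<Rightarrow> nat \<Rightarrow> bool) \<Rightarrow> (nat \<Rightarrow> nat \<Rightarrow> bool) \<Rightarrow> real" where
  "outcome_prob u n X m = (cmod (\<Prod>i<n. copy_amp (H_flags u (at4 X i)) (at4 m i)))\<^sup>2"

definition f_pair :: "bool list \<Rightarrow> bool list \<Rightarrow> nat \<Rightarrow> (nat \<Rightarrow> nat \<Rightarrow> bool) \<Rightarrow> bool" where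
  "f_pair u u' n X = xor_sum n (\<lambda>i. tw u (at4 X i) \<noteq> tw u' (at4 X i))"

end

theory Submission
  imports Defs
begin

text \<open>Write S for the set of parties that apply H on a copy. When both the input
  y and u have odd parity, S = {j. y_j \<noteq> u_j} has even size, and y = u resp.
  y = u' exactly when S is empty resp. everything. A finite computation shows that
  H on an even set S maps psi_4 into the span of odd-weight basis states if S is
  empty or everything, and into the span of even-weight ones if |S| = 2. Hence the
  parity of the four outcomes of copy i is t_u \<oplus> t_u' of the i-th input column,
  and each party only has to send the parity of all its outcomes to Alice.\<close>

lemma weight_Nil [simp]: "weight [] = 0"
  by (simp add: weight_def)

lemma weight_Cons [simp]: "weight (b # v) = (if b then Suc (weight v) else weight v)"
  by (simp add: weight_def)

lemma odd_weight_map2_xor: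
  "length v = length w \<Longrightarrow>
     odd (weight (map2 (\<noteq>) v w)) = (odd (weight v) \<noteq> odd (weight w))"
  by (induction v w rule: list_induct2) auto

lemma xor_sum_cong: "(\<And>i. i < n \<Longrightarrow> f i = g i) \<Longrightarrow> xor_sum n f = xor_sum n g"
  by (induction n) auto

lemma xor_sum_xor: "xor_sum n (\<lambda>i. f i \<noteq> g i) = (xor_sum n f \<noteq> xor_sum n g)"
  by (induction n) auto

lemma xor_sum_odd_weight_at4:
  "xor_sum n (\<lambda>i. odd (weight (at4 m i)))
     = (((xor_sum n (m 0) \<noteq> xor_sum n (m 1)) \<noteq> xor_sum n (m 2)) \<noteq> xor_sum n (m 3))"
proof -
  have "(\<lambda>i. odd (weight (at4 m i))) = (\<lambda>i. ((m 0 i \<noteq> m 1 i) \<noteq> m 2 i) \<noteq> m 3 i)"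
    by (auto simp: at4_def fun_eq_iff)
  then show ?thesis
    by (simp only: xor_sum_xor)
qed

lemma length_4_iff: "length v = 4 \<longleftrightarrow> (\<exists>a b c d. v = [a, b, c, d])"
  by (auto simp: numeral_eq_Suc length_Suc_conv)

lemma H_flags_eq_map2:
  assumes "length u = 4" "length y = 4"
  shows "H_flags u y = map2 (\<noteq>) y u"
  using assms by (auto simp: H_flags_def length_4_iff upt_rec)

lemma length_H_flags [simp]: "length (H_flags u y) = 4"
  by (simp add: H_flags_def)

lemma even_weight_H_flags:
  assumes "u \<in> O4" "y \<in> O4"
  shows "even (weight (H_flags u y))"
proof -
  have "length u = 4" "length y = 4" "odd (weight u)" "odd (weight y)"
    using assms by (simp_all add: O4_def)
  then show ?thesis
    unfolding H_flags_eq_map2[OF \<open>length u = 4\<close> \<open>length y = 4\<close>]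
    using odd_weight_map2_xor[of y u] by simp
qed

lemma H_flags_eq_all_False_iff:
  assumes "length u = 4" "length y = 4"
  shows "H_flags u y = replicate 4 False \<longleftrightarrow> y = u"
proof -
  obtain a b c d e f g h where "u = [a, b, c, d]" "y = [e, f, g, h]"
    using assms by (auto simp: length_4_iff)
  then show ?thesis
    by (simp add: H_flags_def upt_rec numeral_eq_Suc)
qed

lemma H_flags_eq_all_True_iff:
  assumes "length u = 4" "length y = 4"
  shows "H_flags u y = replicate 4 True \<longleftrightarrow> y = map Not u"
proof -
  obtain a b c d e f g h where "u = [a, b, c, d]" "y = [e, f, g, h]"
    using assms by (auto simp: length_4_iff)
  then show ?thesis
    by (auto simp: H_flags_def upt_rec numeral_eq_Suc)
qed

text \<open>Every gate entry and every amplitude of psi_4 is an integer times a scale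
  factor that only depends on the gates, so the support of the amplitude vector
  is decided by integer arithmetic.\<close>

definition local_gate_int :: "bool \<Rightarrow> bool \<Rightarrow> bool \<Rightarrow> int" where
  "local_gate_int h a b = (if h then (if a \<and> b then -1 else 1) else (if a = b then 1 else 0))"

definition gate_scale :: "bool \<Rightarrow> complex" where
  "gate_scale h = (if h then 1 / complex_of_real (sqrt 2) else 1)"

definition psi4_int :: "bool list \<Rightarrow> int" where
  "psi4_int v = (if weight v = 1 then 1 else if weight v = 3 then -1 else 0)"

definition bits4_list :: "bool list list" where
  "bits4_list = [[a, b, c, d]. a \<leftarrow> [False, True], b \<leftarrow> [False, True],
                               c \<leftarrow> [False, True], d \<leftarrow> [False, True]]"

definition copy_amp_int :: "bool list \<Rightarrow> bool list \<Rightarrow> int" where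
  "copy_amp_int hs w =
     (\<Sum>v\<leftarrow>bits4_list. (\<Prod>j<4. local_gate_int (hs!j) (w!j) (v!j)) * psi4_int v)"

lemma local_gate_eq_scaled: "local_gate h a b = of_int (local_gate_int h a b) * gate_scale h"
  by (simp add: local_gate_def hadamard_def local_gate_int_def gate_scale_def)

lemma bits4_eq_set_bits4_list: "bits4 = set bits4_list"
proof
  show "bits4 \<subseteq> set bits4_list"
  proof
    fix v assume "v \<in> bits4"
    then obtain a b c d where "v = [a, b, c, d]"
      by (auto simp: bits4_def length_4_iff)
    then show "v \<in> set bits4_list"
      by (cases a; cases b; cases c; cases d) (simp_all add: bits4_list_def)
  qed
  show "set bits4_list \<subseteq> bits4"
    by (auto simp: bits4_list_def bits4_def)
qed

lemma distinct_bits4_list: "distinct bits4_list"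
  by (simp add: bits4_list_def)

lemma copy_amp_eq_scaled:
  "copy_amp hs w
     = (\<Prod>j<4. gate_scale (hs!j)) / complex_of_real (2 powr (3/2)) * of_int (copy_amp_int hs w)"
proof -
  let ?c = "(\<Prod>j<4. gate_scale (hs!j)) / complex_of_real (2 powr (3/2))"
  have "copy_amp hs w
      = (\<Sum>v\<in>bits4. ?c * of_int ((\<Prod>j<4. local_gate_int (hs!j) (w!j) (v!j)) * psi4_int v))"
    unfolding copy_amp_def
    by (rule sum.cong) (simp_all add: local_gate_eq_scaled prod.distrib psi4_def psi4_int_def)
  also have "\<dots> = ?c * of_int (\<Sum>v\<in>bits4. (\<Prod>j<4. local_gate_int (hs!j) (w!j) (v!j)) * psi4_int v)"
    by (simp add: sum_distrib_left)
  also have "(\<Sum>v\<in>bits4. (\<Prod>j<4. local_gate_int (hs!j) (w!j) (v!j)) * psi4_int v)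
      = copy_amp_int hs w"
    by (simp add: copy_amp_int_def bits4_eq_set_bits4_list
        sum.distinct_set_conv_list[OF distinct_bits4_list])
  finally show ?thesis .
qed

lemma copy_amp_int_support_parity_enumerated:
  "\<forall>hs\<in>set bits4_list. \<forall>w\<in>set bits4_list.
     even (weight hs) \<longrightarrow> copy_amp_int hs w \<noteq> 0 \<longrightarrow>
     odd (weight w) = (hs = replicate 4 False \<or> hs = replicate 4 True)"
  by code_simp

lemma copy_amp_support_parity:
  assumes "length hs = 4" "length w = 4" "even (weight hs)" "copy_amp hs w \<noteq> 0"
  shows "odd (weight w) \<longleftrightarrow> hs = replicate 4 False \<or> hs = replicate 4 True"
proof -
  have "copy_amp_int hs w \<noteq> 0"
    using assms(4) by (auto simp: copy_amp_eq_scaled)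
  moreover have "hs \<in> set bits4_list" "w \<in> set bits4_list"
    using assms(1,2) by (simp_all add: bits4_def flip: bits4_eq_set_bits4_list)
  ultimately show ?thesis
    using copy_amp_int_support_parity_enumerated assms(3) by blast
qed

lemma odd_weight_outcome_eq_indicator:
  assumes "u \<in> O4" "y \<in> O4" "length w = 4" "copy_amp (H_flags u y) w \<noteq> 0"
  shows "odd (weight w) \<longleftrightarrow> tw u y \<noteq> tw (map Not u) y"
proof -
  have lengths: "length u = 4" "length y = 4"
    using assms(1,2) by (simp_all add: O4_def)
  then have "u \<noteq> map Not u"
    by (cases u) auto
  moreover have "odd (weight w) \<longleftrightarrow> y = u \<or> y = map Not u"
    using copy_amp_support_parity[OF length_H_flags assms(3) even_weight_H_flags[OF assms(1,2)] assms(4)]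
    by (simp add: H_flags_eq_all_False_iff[OF lengths] H_flags_eq_all_True_iff[OF lengths])
  ultimately show ?thesis
    by (auto simp: tw_def)
qed

lemma outcome_prob_pos_imp_copy_amp_nonzero:
  assumes "outcome_prob u n X m > 0" "i < n"
  shows "copy_amp (H_flags u (at4 X i)) (at4 m i) \<noteq> 0"
  using assms by (auto simp: outcome_prob_def prod_zero_iff)

theorem corollary1:
  fixes u u' :: "bool list" and A :: "bool list set" and n :: nat
  assumes "u \<in> O4" and "u' = map Not u" and "A \<subseteq> O4" and "n \<ge> 1"
  shows "\<exists>(send :: nat \<Rightarrow> (nat \<Rightarrow> bool) \<Rightarrow> (nat \<Rightarrow> bool) \<Rightarrow> bool)
           (dec :: (nat \<Rightarrow> bool) \<Rightarrow> (nat \<Rightarrow> bool) \<Rightarrow> bool \<Rightarrow> bool \<Rightarrow> bool \<Rightarrow> bool).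
         \<forall>(X :: nat \<Rightarrow> nat \<Rightarrow> bool) (m :: nat \<Rightarrow> nat \<Rightarrow> bool).
           (\<forall>i<n. at4 X i \<in> A) \<longrightarrow> outcome_prob u n X m > 0 \<longrightarrow>
           dec (X 0) (m 0) (send 1 (X 1) (m 1)) (send 2 (X 2) (m 2)) (send 3 (X 3) (m 3))
             = f_pair u u' n X"
proof (intro exI[of _ "\<lambda>_ _ mj. xor_sum n mj"]
    exI[of _ "\<lambda>_ m0 b1 b2 b3. ((xor_sum n m0 \<noteq> b1) \<noteq> b2) \<noteq> b3"] allI impI)
  fix X m :: "nat \<Rightarrow> nat \<Rightarrow> bool"
  assume inputs: "\<forall>i<n. at4 X i \<in> A" and pos: "outcome_prob u n X m > 0"
  have "f_pair u u' n X = xor_sum n (\<lambda>i. odd (weight (at4 m i)))"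
    unfolding f_pair_def
  proof (rule xor_sum_cong)
    fix i assume "i < n"
    with inputs assms(3) have "at4 X i \<in> O4" by auto
    from odd_weight_outcome_eq_indicator[OF assms(1) this _
        outcome_prob_pos_imp_copy_amp_nonzero[OF pos \<open>i < n\<close>]]
    show "(tw u (at4 X i) \<noteq> tw u' (at4 X i)) = odd (weight (at4 m i))"
      by (simp add: assms(2) at4_def)
  qed
  then show "(((xor_sum n (m 0) \<noteq> xor_sum n (m 1)) \<noteq> xor_sum n (m 2)) \<noteq> xor_sum n (m 3))
      = f_pair u u' n X"
    by (simp add: xor_sum_odd_weight_at4)
qed

end
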